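(* In the standing setup below, assume that the restriction of $h$ to $\Omega$ is one-to-one and $0\notin h(\Omega)$. Let $\gamma\in F$ be such that there is a non-zero vector $v\in\mathcal K_\infty(B,x)$ with $Bv=h(\gamma)v$ and $Av\neq0$. Then $\gamma$ is observable.
   Context: Standing setup. Let $\mathbb G$ be a locally compact abelian group (written additively) with Haar measure $dg$ and Pontryagin dual $\widehat{\mathbb G}$ (the group of continuous unitary characters $\gamma:\mathbb G\to\mathbb T$). A weight is a measurable, locally bounded, even function $w:\mathbb G\to[1,\infty)$ with $w(g_1+g_2)\le w(g_1)w(g_2)$ for all $g_1,g_2$; it is assumed to satisfy the Beurling–Domar condition $\sum_{n=0}^\infty \frac{\ln w(ng)}{1+n^2}<\infty$ for all $g\in\mathbb G$, where $ng=g+\dots+g$ ($n$ times). $L_w(\mathbb G)$ is the Banach algebra of functions $f$ with $\|f\|_w=\int_{\mathbb G}|f(g)|w(g)\,dg<\infty$, with convolution as multiplication, and $\hat f(\gamma)=\int_{\mathbb G}f(g)\gamma(-g)\,dg$. Let $\mathcal X$ be a complex Banach space and $\mathcal T:\mathbb G\to B(\mathcal X)$ a strongly continuous group representation with $\|\mathcal T(g)\|\le w(g)$ for all $g$. $\mathcal X$ is an $L_w(\mathbb G)$-module via $fx=\int_{\mathbb G}f(g)\mathcal T(-g)x\,dg$, assumed non-degenerate ($fx=0$ for all $f$ implies $x=0$). The Beurling spectrum of $N\subseteq\mathcal X$ is $\Lambda(N)=\{\gamma\in\widehat{\mathbb G}:$ for every $f\in L_w(\mathbb G)$ with $\hat f(\gamma)\ne0$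 there is $x\in N$ with $fx\neq0\}$; $\Lambda(x):=\Lambda(\{x\})$. For closed $F\subseteq\widehat{\mathbb G}$, $\mathcal X(F)=\{x\in\mathcal X:\Lambda(x)\subseteq F\}$ and $\mathcal X_\gamma:=\mathcal X(\{\gamma\})$. Fixed data: a set $\Omega\subseteq\widehat{\mathbb G}$ and integers $M,\kappa\ge1$ such that for every $\gamma\in\Omega$, $\mathcal X_\gamma$ has finite dimension $m_\gamma\le M$, with a basis $x_\gamma^1,\dots,x_\gamma^{m_\gamma}$. $F\subseteq\Omega$ is a finite set of cardinality $\kappa$ and $x=\sum_{\gamma\in F}\sum_{m=1}^{m_\gamma}c_{\gamma m}x_\gamma^m$ with $c_{\gamma m}\in\mathbb C$, where for each $\gamma\in F$ some $c_{\gamma m}\ne0$. $A:\mathcal X\to\mathbb C^S$ ($S\in\mathbb N$) is a linear operator and $B=\sum_{n=1}^N b_n\mathcal T(g_n)$ with $g_n\in\mathbb G$, $b_n\in\mathbb C\setminus\{0\}$; set $h(\gamma)=\sum_{n=1}^N b_n\gamma(g_n)$ for $\gamma\in\widehat{\mathbb G}$. The measurements are $y_\ell=AB^\ell x$, $\ell=0,1,2,\dots$. The polynomial $p_{\min}(z)=\sum_{\ell=0}^{\kappa M}\alpha_\ell z^\ell$ has coefficients satisfying $\alpha_{\kappa M}=1$ and $\sum_{\ell=0}^{\kappa M}\alpha_\ell y_{\ell+k}=0$ for all $k=0,1,2,\dots$; if such coefficients are not unique, one chooses those for which the largest possible number of initial coefficients vanish, $\alpha_0=\alpha_1=\dots=\alpha_j=0$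 with $j$ maximal. $R_{\min}$ denotes the set of non-zero roots of $p_{\min}$. The maximal Krylov subspace is $\mathcal K_\infty(B,x)=\mathrm{span}\{x,Bx,B^2x,\dots\}$. A spectral value $\gamma\in F$ is called observable if the restriction of $h$ to $\Omega$ is one-to-one, $0\notin h(\Omega)$, and $h(\gamma)\in R_{\min}$. *)

theory Defs
  imports "HOL-Analysis.Analysis"
begin

text \<open>The group G is a type 'g of class topological_ab_group_add + t2_space, assumed
  locally compact. Haar measure: a nonzero translation invariant Radon measure on the
  Borel sets.\<close>

definition haar_measure :: "('g::{topological_ab_group_add,t2_space}) measure \<Rightarrow> bool" where
  "haar_measure \<mu> \<longleftrightarrow>
     sets \<mu> = sets borel \<and>
     (\<forall>a A. A \<in> sets borel \<longrightarrow> emeasure \<mu> ((\<lambda>g. a + g) ` A) = emeasure \<mu> A) \<and>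
     (\<forall>K. compact K \<longrightarrow> emeasure \<mu> K < \<infinity>) \<and>
     (\<forall>U. open U \<and> U \<noteq> {} \<longrightarrow> emeasure \<mu> U > 0) \<and>
     (\<forall>A \<in> sets borel. emeasure \<mu> A = (INF U \<in> {U. open U \<and> A \<subseteq> U}. emeasure \<mu> U)) \<and>
     (\<forall>U. open U \<longrightarrow> emeasure \<mu> U = (SUP K \<in> {K. compact K \<and> K \<subseteq> U}. emeasure \<mu> K))"

definition character :: "('g::topological_ab_group_add \<Rightarrow> complex) \<Rightarrow> bool" where
  "character \<gamma> \<longleftrightarrow> continuous_on UNIV \<gamma> \<and> (\<forall>a b. \<gamma> (a + b) = \<gamma> a * \<gamma> b)
     \<and> (\<forall>a. cmod (\<gamma> a) = 1)"

definition gmult :: "nat \<Rightarrow> 'g::ab_group_add \<Rightarrow> 'g" where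
  "gmult n g = (\<Sum>i<n. g)"

definition weight :: "('g::{topological_ab_group_add,t2_space} \<Rightarrow> real) \<Rightarrow> bool" where
  "weight w \<longleftrightarrow> w \<in> borel_measurable borel \<and>
     (\<forall>K. compact K \<longrightarrow> bounded (w ` K)) \<and>
     (\<forall>g. w (- g) = w g) \<and> (\<forall>g. 1 \<le> w g) \<and>
     (\<forall>g1 g2. w (g1 + g2) \<le> w g1 * w g2) \<and>
     (\<forall>g. summable (\<lambda>n. ln (w (gmult n g)) / (1 + (real n)\<^sup>2)))"

definition Lw :: "'g measure \<Rightarrow> ('g \<Rightarrow> real) \<Rightarrow> ('g \<Rightarrow> complex) set" where
  "Lw \<mu> w = {f. f \<in> borel_measurable \<mu> \<and> integrable \<mu> (\<lambda>g. cmod (f g) * w g)}"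

definition fourier :: "('g::ab_group_add) measure \<Rightarrow> ('g \<Rightarrow> complex) \<Rightarrow> ('g \<Rightarrow> complex) \<Rightarrow> complex" where
  "fourier \<mu> f \<gamma> = (\<integral>g. f g * \<gamma> (- g) \<partial>\<mu>)"

text \<open>A complex Banach space: a (real) Banach space type 'x together with a complex scalar
  multiplication smc extending the real one and compatible with the norm.\<close>
definition complex_banach :: "(complex \<Rightarrow> 'x::banach \<Rightarrow> 'x) \<Rightarrow> bool" where
  "complex_banach smc \<longleftrightarrow> vector_space smc \<and>
     (\<forall>r u. smc (complex_of_real r) u = r *\<^sub>R u) \<and>
     (\<forall>c u. norm (smc c u) = cmod c * norm u)"

definition representation ::
  "(complex \<Rightarrow> 'x::banach \<Rightarrow> 'x) \<Rightarrow> ('g::{topological_ab_group_add} \<Rightarrow> real)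
     \<Rightarrow> ('g \<Rightarrow> 'x \<Rightarrow> 'x) \<Rightarrow> bool" where
  "representation smc w T \<longleftrightarrow>
     (\<forall>g. bounded_linear (T g) \<and> (\<forall>c u. T g (smc c u) = smc c (T g u))) \<and>
     T 0 = id \<and> (\<forall>a b. T (a + b) = T a \<circ> T b) \<and>
     (\<forall>u. continuous_on UNIV (\<lambda>g. T g u)) \<and>
     (\<forall>g u. norm (T g u) \<le> w g * norm u)"

text \<open>Module action f x = integral of f(g) T(-g)x dg, taken as a (weak) vector integral:
  the unique vector whose image under every bounded (real-)linear functional is the
  integral of the image.\<close>
definition act :: "'g::ab_group_add measure \<Rightarrow> (complex \<Rightarrow> 'x::banach \<Rightarrow> 'x)
     \<Rightarrow> ('g \<Rightarrow> 'x \<Rightarrow> 'x) \<Rightarrow> ('g \<Rightarrow> complex) \<Rightarrow> 'x \<Rightarrow> 'x" where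
  "act \<mu> smc T f u = (THE y. \<forall>\<phi>::'x \<Rightarrow> real. bounded_linear \<phi> \<longrightarrow>
       \<phi> y = (\<integral>g. \<phi> (smc (f g) (T (- g) u)) \<partial>\<mu>))"

definition nondegenerate where
  "nondegenerate \<mu> w smc T \<longleftrightarrow> (\<forall>u. (\<forall>f \<in> Lw \<mu> w. act \<mu> smc T f u = 0) \<longrightarrow> u = 0)"

definition beurling_spectrum where
  "beurling_spectrum \<mu> w smc T N = {\<gamma>. character \<gamma> \<and>
     (\<forall>f \<in> Lw \<mu> w. fourier \<mu> f \<gamma> \<noteq> 0 \<longrightarrow> (\<exists>u \<in> N. act \<mu> smc T f u \<noteq> 0))}"

definition spectral_subspace where
  "spectral_subspace \<mu> w smc T Fs = {u. beurling_spectrum \<mu> w smc T {u} \<subseteq> Fs}"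

definition Bop :: "(complex \<Rightarrow> 'x \<Rightarrow> 'x) \<Rightarrow> ('g \<Rightarrow> 'x \<Rightarrow> 'x) \<Rightarrow> (nat \<Rightarrow> complex)
     \<Rightarrow> (nat \<Rightarrow> 'g) \<Rightarrow> nat \<Rightarrow> 'x \<Rightarrow> ('x::comm_monoid_add)" where
  "Bop smc T b gs N u = (\<Sum>n = 1..N. smc (b n) (T (gs n) u))"

definition hfun :: "(nat \<Rightarrow> complex) \<Rightarrow> (nat \<Rightarrow> 'g) \<Rightarrow> nat \<Rightarrow> ('g \<Rightarrow> complex) \<Rightarrow> complex" where
  "hfun b gs N \<gamma> = (\<Sum>n = 1..N. b n * \<gamma> (gs n))"

definition krylov :: "(complex \<Rightarrow> 'x \<Rightarrow> 'x) \<Rightarrow> ('x \<Rightarrow> 'x) \<Rightarrow> 'x \<Rightarrow> ('x::ab_group_add) set" where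
  "krylov smc B x = module.span smc (range (\<lambda>l. (B ^^ l) x))"

definition pmin_admissible :: "(nat \<Rightarrow> complex ^ 's) \<Rightarrow> nat \<Rightarrow> (nat \<Rightarrow> complex) \<Rightarrow> bool" where
  "pmin_admissible y d \<beta> \<longleftrightarrow> \<beta> d = 1 \<and> (\<forall>k. (\<Sum>l = 0..d. \<beta> l *s y (l + k)) = 0)"

text \<open>The chosen coefficients: admissible, and with the largest possible block of
  vanishing initial coefficients among all admissible ones.\<close>
definition pmin_coeffs :: "(nat \<Rightarrow> complex ^ 's) \<Rightarrow> nat \<Rightarrow> (nat \<Rightarrow> complex) \<Rightarrow> bool" where
  "pmin_coeffs y d \<alpha> \<longleftrightarrow> pmin_admissible y d \<alpha> \<and>
     (\<forall>\<beta>. pmin_admissible y d \<beta> \<longrightarrow>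
        (\<forall>j \<le> d. (\<forall>i \<le> j. \<beta> i = 0) \<longrightarrow> (\<forall>i \<le> j. \<alpha> i = 0)))"

definition Rmin :: "(nat \<Rightarrow> complex) \<Rightarrow> nat \<Rightarrow> complex set" where
  "Rmin \<alpha> d = {z. z \<noteq> 0 \<and> (\<Sum>l = 0..d. \<alpha> l * z ^ l) = 0}"

definition observable where
  "observable F \<Omega> h \<alpha> d \<gamma> \<longleftrightarrow> \<gamma> \<in> F \<and> inj_on h \<Omega> \<and> 0 \<notin> h ` \<Omega> \<and> h \<gamma> \<in> Rmin \<alpha> d"

end

theory Submission
  imports Defs
begin

text \<open>For each k the map u \<mapsto> \<Sum>l \<alpha>_l A(B^(l+k) u) is linear and kills every B^j x,
  hence kills the whole Krylov space. Applied to an eigenvector v with B v = \<lambda> v it gives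
  p_min(\<lambda>) A v = 0, so A v \<noteq> 0 forces p_min(h(\<gamma>)) = 0, and h(\<gamma>) \<noteq> 0 because 0 \<notin> h(\<Omega>).\<close>

lemma linear_funpow:
  assumes "Vector_Spaces.linear s s B"
  shows "Vector_Spaces.linear s s (B ^^ n)"
proof (induction n)
  case 0
  have "vector_space s"
    using assms unfolding Vector_Spaces.linear_def by blast
  then show ?case
    using vector_space.linear_id[of s] by (simp add: id_def)
next
  case (Suc n)
  show ?case
    unfolding funpow.simps(2) by (rule Vector_Spaces.linear_compose[OF Suc.IH assms])
qed

lemma (in vector_space) eigenvector_funpow:
  assumes "Vector_Spaces.linear scale scale B" and "B v = scale c v"
  shows "(B ^^ n) v = scale (c ^ n) v"
proof (induction n)
  case (Suc n)
  interpret B: Vector_Spaces.linear scale scale B by fact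
  show ?case
    using Suc assms(2) by (simp add: B.scale mult.commute)
qed simp

lemma recurrence_on_krylov:
  fixes s1 :: "complex \<Rightarrow> 'b::ab_group_add \<Rightarrow> 'b" and s2 :: "complex \<Rightarrow> 'c::ab_group_add \<Rightarrow> 'c"
  assumes B: "Vector_Spaces.linear s1 s1 B" and A: "Vector_Spaces.linear s1 s2 A"
    and rec: "\<And>k. (\<Sum>l = 0..d. s2 (\<alpha> l) (A ((B ^^ (l + k)) x))) = 0"
    and v: "v \<in> krylov s1 B x"
  shows "(\<Sum>l = 0..d. s2 (\<alpha> l) (A ((B ^^ (l + k)) v))) = 0"
proof -
  interpret A: Vector_Spaces.linear s1 s2 A by fact
  interpret pair: vector_space_pair s1 s2 by unfold_locales
  have "Vector_Spaces.linear s1 s2 (\<lambda>u. s2 (\<alpha> l) (A ((B ^^ (l + k)) u)))" for l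
    using pair.linear_compose_scale_right[OF Vector_Spaces.linear_compose[OF linear_funpow[OF B] A]]
    by (simp add: o_def)
  then have "Vector_Spaces.linear s1 s2 (\<lambda>u. \<Sum>l = 0..d. s2 (\<alpha> l) (A ((B ^^ (l + k)) u)))"
    by (rule pair.linear_compose_sum[rule_format])
  moreover have "(\<Sum>l = 0..d. s2 (\<alpha> l) (A ((B ^^ (l + k)) u))) = 0"
    if u: "u \<in> range (\<lambda>j. (B ^^ j) x)" for u
  proof -
    obtain j where "u = (B ^^ j) x"
      using u by blast
    then have "(B ^^ (l + k)) u = (B ^^ (l + (k + j))) x" for l
      by (simp add: funpow_add add.assoc)
    then show ?thesis
      using rec[of "k + j"] by simp
  qed
  ultimately show ?thesis
    using v unfolding krylov_def by (rule pair.linear_eq_0_on_span)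
qed

lemma krylov_eigenvalue_root:
  fixes s1 :: "complex \<Rightarrow> 'b::ab_group_add \<Rightarrow> 'b" and s2 :: "complex \<Rightarrow> 'c::ab_group_add \<Rightarrow> 'c"
  assumes B: "Vector_Spaces.linear s1 s1 B" and A: "Vector_Spaces.linear s1 s2 A"
    and rec: "\<And>k. (\<Sum>l = 0..d. s2 (\<alpha> l) (A ((B ^^ (l + k)) x))) = 0"
    and v: "v \<in> krylov s1 B x" and eig: "B v = s1 c v" and Av: "A v \<noteq> 0"
  shows "(\<Sum>l = 0..d. \<alpha> l * c ^ l) = 0"
proof -
  interpret A: Vector_Spaces.linear s1 s2 A by fact
  have "s2 (\<Sum>l = 0..d. \<alpha> l * c ^ l) (A v) = (\<Sum>l = 0..d. s2 (\<alpha> l) (A ((B ^^ l) v)))"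
    by (simp add: A.vs1.eigenvector_funpow[OF B eig] A.scale A.vs2.scale_sum_left)
  also have "\<dots> = 0"
    using recurrence_on_krylov[OF B A rec v, of 0] by simp
  finally show ?thesis
    using Av by simp
qed

lemma Bop_linear:
  assumes cb: "complex_banach smc" and rep: "representation smc w T"
  shows "Vector_Spaces.linear smc smc (Bop smc T b gs N)"
proof -
  interpret vector_space smc
    using cb unfolding complex_banach_def by blast
  interpret pair: vector_space_pair smc smc by unfold_locales
  have "Vector_Spaces.linear smc smc (T g)" for g
    using rep unfolding Defs.representation_def Vector_Spaces.linear_iff
    by (auto simp: vector_space_axioms linear_add bounded_linear.linear)
  then show ?thesis
    unfolding Bop_def
    by (intro pair.linear_compose_sum ballI pair.linear_compose_scale_right)
qed

theorem proposition2p3: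
  fixes \<mu> :: "('g::{topological_ab_group_add,t2_space}) measure"
    and w :: "'g \<Rightarrow> real"
    and smc :: "complex \<Rightarrow> 'x::banach \<Rightarrow> 'x"
    and T :: "'g \<Rightarrow> 'x \<Rightarrow> 'x"
    and \<Omega> F :: "('g \<Rightarrow> complex) set"
    and M \<kappa> N :: nat
    and m :: "('g \<Rightarrow> complex) \<Rightarrow> nat"
    and xb :: "('g \<Rightarrow> complex) \<Rightarrow> nat \<Rightarrow> 'x"
    and c :: "('g \<Rightarrow> complex) \<Rightarrow> nat \<Rightarrow> complex"
    and x v :: 'x
    and A :: "'x \<Rightarrow> complex ^ 's::finite"
    and b :: "nat \<Rightarrow> complex"
    and gs :: "nat \<Rightarrow> 'g"
    and \<alpha> :: "nat \<Rightarrow> complex"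
    and \<gamma> :: "'g \<Rightarrow> complex"
  assumes lc: "locally_compact_space (euclidean :: 'g topology)"
    and haar: "haar_measure \<mu>"
    and wt: "weight w"
    and cb: "complex_banach smc"
    and rep: "representation smc w T"
    and nondeg: "nondegenerate \<mu> w smc T"
    and \<Omega>_dual: "\<Omega> \<subseteq> {\<eta>. character \<eta>}"
    and M_pos: "M \<ge> 1" and \<kappa>_pos: "\<kappa> \<ge> 1"
    and basis: "\<forall>\<eta> \<in> \<Omega>. m \<eta> \<le> M \<and>
                 vector_space.dim smc (spectral_subspace \<mu> w smc T {\<eta>}) = m \<eta> \<and>
                 inj_on (xb \<eta>) {1..m \<eta>} \<and>
                 \<not> module.dependent smc (xb \<eta> ` {1..m \<eta>}) \<and>
                 module.span smc (xb \<eta> ` {1..m \<eta>}) = spectral_subspace \<mu> w smc T {\<eta>}"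
    and F_sub: "F \<subseteq> \<Omega>" and F_fin: "finite F" and F_card: "card F = \<kappa>"
    and x_def: "x = (\<Sum>\<eta>\<in>F. \<Sum>k = 1..m \<eta>. smc (c \<eta> k) (xb \<eta> k))"
    and c_nz: "\<forall>\<eta> \<in> F. \<exists>k \<in> {1..m \<eta>}. c \<eta> k \<noteq> 0"
    and A_lin: "Vector_Spaces.linear smc (*s) A"
    and b_nz: "\<forall>n \<in> {1..N}. b n \<noteq> 0"
    and pmin: "pmin_coeffs (\<lambda>l. A ((Bop smc T b gs N ^^ l) x)) (\<kappa> * M) \<alpha>"
    and h_inj: "inj_on (hfun b gs N) \<Omega>"
    and h_nz: "0 \<notin> hfun b gs N ` \<Omega>"
    and \<gamma>F: "\<gamma> \<in> F"
    and vK: "v \<in> krylov smc (Bop smc T b gs N) x"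
    and v_nz: "v \<noteq> 0"
    and v_eig: "Bop smc T b gs N v = smc (hfun b gs N \<gamma>) v"
    and Av: "A v \<noteq> 0"
  shows "observable F \<Omega> (hfun b gs N) \<alpha> (\<kappa> * M) \<gamma>"
proof -
  let ?B = "Bop smc T b gs N" and ?h = "hfun b gs N"
  have rec: "(\<Sum>l = 0..\<kappa> * M. \<alpha> l *s A ((?B ^^ (l + k)) x)) = 0" for k
    using pmin unfolding pmin_coeffs_def pmin_admissible_def by blast
  have "(\<Sum>l = 0..\<kappa> * M. \<alpha> l * ?h \<gamma> ^ l) = 0"
    using krylov_eigenvalue_root[OF Bop_linear[OF cb rep] A_lin rec vK v_eig Av] .
  moreover have "?h \<gamma> \<noteq> 0"
    using h_nz \<gamma>F F_sub by force
  ultimately show ?thesis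
    unfolding observable_def Rmin_def using \<gamma>F h_inj h_nz by blast
qed

end
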